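(* Let $\mathfrak{M}$ be a model, $x$ a variable, $f$ any Boolean expression in $n$ arguments, $\theta,\varphi_1,\dots,\varphi_n$ formulas, $z_1,\dots,z_m$ variables distinct from $x$ none of which occurs free in $\theta$, and $Q_1,\dots,Q_m\in\{\forall,\exists\}$. If every $\varphi_i$ is non-dependent of $x$ in $\mathfrak{M}$ provided $\theta$, then $$[\![\exists x\theta\to Q_mz_m\dots Q_1z_1\,f\big(\forall x(\theta\to\varphi_1),\dots,\forall x(\theta\to\varphi_n)\big)]\!]^{\mathfrak{M}}=[\![\forall x\big(\theta\to Q_mz_m\dots Q_1z_1\,f(\varphi_1,\dots,\varphi_n)\big)]\!]^{\mathfrak{M}},$$ and hence, if moreover $\mathfrak{M}\models\exists x\theta$, then $$[\![Q_mz_m\dots Q_1z_1\,f\big(\forall x(\theta\to\varphi_1),\dots,\forall x(\theta\to\varphi_n)\big)]\!]^{\mathfrak{M}}=[\![\forall x\big(\theta\to Q_mz_m\dots Q_1z_1\,f(\varphi_1,\dots,\varphi_n)\big)]\!]^{\mathfrak{M}}.$$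
   Context: Work in first-order logic with equality over a relational signature, with countably many variables $v_1,v_2,\dots$. A model $\mathfrak{M}$ has nonempty universe $M$; assignments are $\bar a\in M^\omega$ ($a_i$ is the value of $v_i$); for $x=v_i$, $b\in M$, $\bar a^x_b$ is $\bar a$ with $i$-th entry replaced by $b$. $[\![\varphi]\!]^{\mathfrak{M}}=\{\bar a\in M^\omega:\mathfrak{M}\models\varphi[\bar a]\}$; $\mathfrak{M}\models\chi$ means every $\bar a$ satisfies $\chi$. A Boolean expression is built from its arguments using $\neg$ and $\land$ (and hence any Boolean connectives). Definition: $\varphi$ is non-dependent of $x$ in $\mathfrak{M}$ provided $\theta$ iff for all $\bar a\in M^\omega$, $b\in M$: if $\mathfrak{M}\models\theta[\bar a]$ and $\mathfrak{M}\models\theta[\bar a^x_b]$ then ($\mathfrak{M}\models\varphi[\bar a]\iff\mathfrak{M}\models\varphi[\bar a^x_b]$). *)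

theory Defs
  imports Main
begin

datatype 'r fm =
    Eq nat nat
  | Rel 'r "nat list"
  | Neg "'r fm"
  | Conj "'r fm" "'r fm"
  | All nat "'r fm"

definition Imp :: "'r fm \<Rightarrow> 'r fm \<Rightarrow> 'r fm" where
  "Imp p q = Neg (Conj p (Neg q))"

definition Ex :: "nat \<Rightarrow> 'r fm \<Rightarrow> 'r fm" where
  "Ex x p = Neg (All x (Neg p))"

fun freevars :: "'r fm \<Rightarrow> nat set" where
  "freevars (Eq x y) = {x, y}"
| "freevars (Rel R xs) = set xs"
| "freevars (Neg p) = freevars p"
| "freevars (Conj p q) = freevars p \<union> freevars q"
| "freevars (All x p) = freevars p - {x}"

text \<open>A model is a universe M (nonempty) with an interpretation I of relation symbols.
Assignments are a :: nat \<Rightarrow> 'a (a i is the value of v_i).\<close>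

fun sat :: "'a set \<Rightarrow> ('r \<Rightarrow> 'a list \<Rightarrow> bool) \<Rightarrow> (nat \<Rightarrow> 'a) \<Rightarrow> 'r fm \<Rightarrow> bool" where
  "sat M I a (Eq x y) = (a x = a y)"
| "sat M I a (Rel R xs) = I R (map a xs)"
| "sat M I a (Neg p) = (\<not> sat M I a p)"
| "sat M I a (Conj p q) = (sat M I a p \<and> sat M I a q)"
| "sat M I a (All x p) = (\<forall>b\<in>M. sat M I (a(x := b)) p)"

definition assigns :: "'a set \<Rightarrow> (nat \<Rightarrow> 'a) set" where
  "assigns M = {a. \<forall>i. a i \<in> M}"

definition meaning :: "'a set \<Rightarrow> ('r \<Rightarrow> 'a list \<Rightarrow> bool) \<Rightarrow> 'r fm \<Rightarrow> (nat \<Rightarrow> 'a) set" where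
  "meaning M I p = {a \<in> assigns M. sat M I a p}"

definition models :: "'a set \<Rightarrow> ('r \<Rightarrow> 'a list \<Rightarrow> bool) \<Rightarrow> 'r fm \<Rightarrow> bool" where
  "models M I p = (\<forall>a\<in>assigns M. sat M I a p)"

definition non_dependent ::
  "'a set \<Rightarrow> ('r \<Rightarrow> 'a list \<Rightarrow> bool) \<Rightarrow> 'r fm \<Rightarrow> nat \<Rightarrow> 'r fm \<Rightarrow> bool" where
  "non_dependent M I p x th =
     (\<forall>a\<in>assigns M. \<forall>b\<in>M. sat M I a th \<longrightarrow> sat M I (a(x := b)) th \<longrightarrow>
        (sat M I a p \<longleftrightarrow> sat M I (a(x := b)) p))"

datatype bexp = BArg nat | BNeg bexp | BConj bexp bexp

fun bargs :: "bexp \<Rightarrow> nat set" where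
  "bargs (BArg i) = {i}"
| "bargs (BNeg e) = bargs e"
| "bargs (BConj e1 e2) = bargs e1 \<union> bargs e2"

text \<open>f(\<phi>_1,...,\<phi>_n): argument place i (0-based) is filled with ps ! i.\<close>
fun bapply :: "bexp \<Rightarrow> 'r fm list \<Rightarrow> 'r fm" where
  "bapply (BArg i) ps = ps ! i"
| "bapply (BNeg e) ps = Neg (bapply e ps)"
| "bapply (BConj e1 e2) ps = Conj (bapply e1 ps) (bapply e2 ps)"

text \<open>Quantifier prefix: the list [(Q_1,z_1),...,(Q_m,z_m)] (True = \<forall>, False = \<exists>)
applied to \<phi> gives Q_m z_m ... Q_1 z_1 \<phi> (first list element innermost).\<close>
fun quant :: "(bool \<times> nat) list \<Rightarrow> 'r fm \<Rightarrow> 'r fm" where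
  "quant [] p = p"
| "quant ((q, z) # qs) p = quant qs (if q then All z p else Ex z p)"

end

theory Submission
  imports Defs
begin

text \<open>Fix an assignment \<open>a\<close> and a value \<open>c\<close> with \<open>\<theta>\<close> true at \<open>a(x:=c)\<close>. By non-dependence,
\<open>\<forall>x(\<theta> \<rightarrow> \<phi>\<^sub>i)\<close> holds at \<open>a\<close> exactly when \<open>\<phi>\<^sub>i\<close> holds at \<open>a(x:=c)\<close>. This agreement survives
Boolean combinations, and also the quantifiers \<open>Q\<^sub>j z\<^sub>j\<close>: updating \<open>z\<^sub>j\<close> commutes with
updating \<open>x\<close> and does not affect \<open>\<theta>\<close>. Hence the left-hand prefix formula at \<open>a\<close> agrees
with the right-hand one at every \<open>\<theta>\<close>-variant \<open>a(x:=c)\<close>. If \<open>\<exists>x\<theta>\<close> fails at \<open>a\<close>,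
both sides of the first identity hold vacuously.\<close>

lemma sat_Imp [simp]: "sat M I a (Imp p q) \<longleftrightarrow> (sat M I a p \<longrightarrow> sat M I a q)"
  by (simp add: Imp_def)

lemma sat_Ex [simp]: "sat M I a (Ex x p) \<longleftrightarrow> (\<exists>b\<in>M. sat M I (a(x := b)) p)"
  by (simp add: Ex_def)

lemma assigns_fun_upd: "a \<in> assigns M \<Longrightarrow> c \<in> M \<Longrightarrow> a(x := c) \<in> assigns M"
  by (simp add: assigns_def)

lemma sat_cong_freevars:
  "\<forall>v\<in>freevars p. a v = a' v \<Longrightarrow> sat M I a p = sat M I a' p"
proof (induction p arbitrary: a a')
  case (Rel R xs)
  then show ?case by (simp cong: map_cong)
next
  case (Conj p q)
  then have "sat M I a p = sat M I a' p" "sat M I a q = sat M I a' q" by auto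
  then show ?case by simp
next
  case (All z p)
  then have "sat M I (a(z := b)) p = sat M I (a'(z := b)) p" for b
    by (intro All.IH) auto
  then show ?case by simp
qed auto

lemma sat_fun_upd_nonfree: "z \<notin> freevars p \<Longrightarrow> sat M I (a(z := d)) p = sat M I a p"
  by (rule sat_cong_freevars) auto

lemma sat_quant_cong:
  assumes "\<forall>(q, z)\<in>set qs. \<forall>a a' d. R a a' \<longrightarrow> d \<in> M \<longrightarrow> R (a(z := d)) (a'(z := d))"
    and "\<And>a a'. R a a' \<Longrightarrow> sat M I a p = sat M I a' p'"
    and "R a a'"
  shows "sat M I a (quant qs p) = sat M I a' (quant qs p')"
  using assms
proof (induction qs arbitrary: p p' a a')
  case (Cons qz qs)
  obtain q z where qz: "qz = (q, z)" by force
  have "sat M I a (if q then All z p else Ex z p) = sat M I a' (if q then All z p' else Ex z p')"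
    if "R a a'" for a a'
  proof -
    have "sat M I (a(z := d)) p = sat M I (a'(z := d)) p'" if "d \<in> M" for d
      using Cons.prems(1,2) \<open>R a a'\<close> that qz by auto
    then show ?thesis by auto
  qed
  then show ?case
    unfolding qz quant.simps using Cons.prems by (intro Cons.IH) auto
qed simp

lemma sat_bapply_cong:
  assumes "bargs f \<subseteq> {..<length ps}" and "length ps' = length ps"
    and "\<And>i. i < length ps \<Longrightarrow> sat M I a (ps ! i) = sat M I a' (ps' ! i)"
  shows "sat M I a (bapply f ps) = sat M I a' (bapply f ps')"
  using assms(1) by (induction f) (simp_all add: assms(3))

lemma sat_All_Imp_non_dependent:
  assumes nd: "non_dependent M I p x th"
    and a: "a \<in> assigns M" and c: "c \<in> M" and th: "sat M I (a(x := c)) th"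
  shows "sat M I a (All x (Imp th p)) = sat M I (a(x := c)) p"
proof -
  have "sat M I (a(x := b)) p = sat M I (a(x := c)) p"
    if b: "b \<in> M" and th_b: "sat M I (a(x := b)) th" for b
  proof -
    have "sat M I ((a(x := c))(x := b)) th" using th_b by simp
    with nd assigns_fun_upd[OF a c] b th
    have "sat M I (a(x := c)) p \<longleftrightarrow> sat M I ((a(x := c))(x := b)) p"
      unfolding non_dependent_def by blast
    then show ?thesis by simp
  qed
  then show ?thesis unfolding sat.simps sat_Imp using c th by blast
qed

definition theta_variant ::
  "'a set \<Rightarrow> ('r \<Rightarrow> 'a list \<Rightarrow> bool) \<Rightarrow> nat \<Rightarrow> 'r fm \<Rightarrow> (nat \<Rightarrow> 'a) \<Rightarrow> (nat \<Rightarrow> 'a) \<Rightarrow> bool"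
where
  "theta_variant M I x th a a' \<longleftrightarrow>
     a \<in> assigns M \<and> (\<exists>c\<in>M. a' = a(x := c) \<and> sat M I a' th)"

lemma theta_variant_fun_upd:
  assumes "theta_variant M I x th a a'" and "z \<noteq> x" "z \<notin> freevars th" "d \<in> M"
  shows "theta_variant M I x th (a(z := d)) (a'(z := d))"
proof -
  obtain c where "a \<in> assigns M" "c \<in> M" "a' = a(x := c)" "sat M I a' th"
    using assms(1) unfolding theta_variant_def by blast
  with assms(2-4) have "a(z := d) \<in> assigns M" "a'(z := d) = (a(z := d))(x := c)"
    "sat M I (a'(z := d)) th"
    by (simp_all add: assigns_fun_upd fun_upd_twist sat_fun_upd_nonfree)
  then show ?thesis
    unfolding theta_variant_def using \<open>c \<in> M\<close> by auto
qed

lemma sat_bapply_All_Imp_theta_variant: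
  assumes "theta_variant M I x th a a'"
    and "bargs f \<subseteq> {..<length phis}" and "\<forall>p\<in>set phis. non_dependent M I p x th"
  shows "sat M I a (bapply f (map (\<lambda>p. All x (Imp th p)) phis)) = sat M I a' (bapply f phis)"
proof -
  obtain c where "a \<in> assigns M" "c \<in> M" "a' = a(x := c)" "sat M I a' th"
    using assms(1) unfolding theta_variant_def by blast
  then have "sat M I a (All x (Imp th (phis ! i))) = sat M I a' (phis ! i)"
    if "i < length phis" for i
    using sat_All_Imp_non_dependent[OF assms(3)[rule_format, OF nth_mem[OF that]]
        \<open>a \<in> assigns M\<close> \<open>c \<in> M\<close>]
    by simp
  then show ?thesis
    using assms(2) by (intro sat_bapply_cong) simp_all
qed

theorem mainTheorem10:
  fixes M :: "'a set" and I :: "'r \<Rightarrow> 'a list \<Rightarrow> bool"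
    and x :: nat and f :: bexp and th :: "'r fm" and phis :: "'r fm list"
    and qs :: "(bool \<times> nat) list"
  assumes "M \<noteq> {}"
    and "bargs f \<subseteq> {..<length phis}"
    and "\<forall>(q, z) \<in> set qs. z \<noteq> x \<and> z \<notin> freevars th"
    and "\<forall>p \<in> set phis. non_dependent M I p x th"
  shows "meaning M I (Imp (Ex x th)
            (quant qs (bapply f (map (\<lambda>p. All x (Imp th p)) phis))))
         = meaning M I (All x (Imp th (quant qs (bapply f phis))))
         \<and> (models M I (Ex x th) \<longrightarrow>
         meaning M I (quant qs (bapply f (map (\<lambda>p. All x (Imp th p)) phis)))
         = meaning M I (All x (Imp th (quant qs (bapply f phis)))))"
proof -
  let ?L = "quant qs (bapply f (map (\<lambda>p. All x (Imp th p)) phis))"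
  let ?R = "quant qs (bapply f phis)"
  have shift: "sat M I a ?L = sat M I (a(x := c)) ?R"
    if "a \<in> assigns M" "c \<in> M" "sat M I (a(x := c)) th" for a c
  proof (rule sat_quant_cong[where R = "theta_variant M I x th"])
    show "\<forall>(q, z)\<in>set qs. \<forall>a a' d. theta_variant M I x th a a' \<longrightarrow> d \<in> M \<longrightarrow>
        theta_variant M I x th (a(z := d)) (a'(z := d))"
      using assms(3) theta_variant_fun_upd by fast
    show "theta_variant M I x th a (a(x := c))"
      unfolding theta_variant_def using that by blast
  qed (use assms(2,4) sat_bapply_All_Imp_theta_variant in blast)
  have "sat M I a (Imp (Ex x th) ?L) = sat M I a (All x (Imp th ?R))" if "a \<in> assigns M" for a
    using shift[OF that] by auto
  moreover have "sat M I a (Imp (Ex x th) ?L) = sat M I a ?L"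
    if "a \<in> assigns M" "models M I (Ex x th)" for a
    using that unfolding models_def by auto
  ultimately show ?thesis unfolding meaning_def by (auto simp del: sat.simps sat_Imp sat_Ex)
qed

end
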